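(* Let $E=\mathbb{C}/\Lambda$ be a complex elliptic curve with origin $P$, let $\sigma:E\to E$ be the involution $z\mapsto -z$, and let $Q,R,S$ be the three nonzero $2$-torsion points of $E$. Let $g$ be a meromorphic function on $E$ of degree $5$ with a pole of order $5$ at $P$, with exactly three further ramification points $x,y,z\in E\setminus\{P\}$, each of ramification index $3$, and no other ramification. Suppose that $g\circ\sigma=\pm g$, that $x=Q$ and that $g(Q)=0$. Then the divisor of zeros of $g$ is $g^*(0)=3Q+R+S$. *)

theory Defs
  imports "HOL-Complex_Analysis.Complex_Analysis"
begin

definition lattice :: "complex \<Rightarrow> complex \<Rightarrow> complex set" where
  "lattice w1 w2 = {of_int m * w1 + of_int n * w2 | m n. True}"

text \<open>Congruence modulo the lattice (equality of points of E = C / Lambda).\<close>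
definition lat_cong :: "complex \<Rightarrow> complex \<Rightarrow> complex \<Rightarrow> complex \<Rightarrow> bool" where
  "lat_cong w1 w2 a b \<longleftrightarrow> a - b \<in> lattice w1 w2"

end

theory Submission
  imports Defs
begin

(* A pole of odd order at 0 rules out g(-w) = g(w), so g is odd; an odd
   elliptic function vanishes at every nonzero 2-torsion point, since
   g(T) = g(T - 2T) = g(-T) = -g(T). Integrating g'/g around the boundary of a period
   parallelogram gives 0, because opposite sides cancel by periodicity; by the argument
   principle the zeros of g modulo the lattice therefore have total multiplicity 5, the
   order of the only pole. The ramification data force every zero to have order 1 or 3,
   and Q has order 3, so the degree count 3 + 1 + 1 = 5 leaves room for nothing besides
   simple zeros at R and S. *)

(* For a real basis (u, v) of the plane, z = coord u v z * u + coord v u z * v. *)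
definition coord :: "complex \<Rightarrow> complex \<Rightarrow> complex \<Rightarrow> real" where
  "coord u v z = Im (z * cnj v) / Im (u * cnj v)"

lemma linear_coord: "linear (coord u v)"
  by (rule linearI) (simp_all add: coord_def distrib_right add_divide_distrib scaleR_conv_of_real mult.assoc)

lemma bounded_linear_coord: "bounded_linear (coord u v)"
  using linear_coord linear_conv_bounded_linear by blast

lemmas coord_add = linear_add[OF linear_coord]
   and coord_diff = linear_diff[OF linear_coord]
   and coord_scaleR = linear_scale[OF linear_coord]
   and coord_0 [simp] = linear_0[OF linear_coord]

lemma coord_of_real_mult [simp]: "coord u v (of_real r * z) = r * coord u v z"
  using coord_scaleR by (simp add: scaleR_conv_of_real)

lemma coord_second [simp]: "coord u v v = 0"
  by (simp add: coord_def)

lemma Im_cnj_swap: "Im (v * cnj u) = - Im (u * cnj v)"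
  by (simp add: algebra_simps)

lemma Im_mult_cnj_ne_0_iff: "Im (u * cnj v) \<noteq> 0 \<longleftrightarrow> Im (v / u) \<noteq> 0"
  by (cases "u = 0") (auto simp: Im_divide algebra_simps)

locale lattice_basis =
  fixes w1 w2 :: complex
  assumes basis: "Im (w1 * cnj w2) \<noteq> 0"
begin

abbreviation "L \<equiv> lattice w1 w2"
abbreviation "c1 \<equiv> coord w1 w2"
abbreviation "c2 \<equiv> coord w2 w1"

lemma basis': "Im (w2 * cnj w1) \<noteq> 0"
  using basis by (subst Im_cnj_swap) simp

lemma coord_basis [simp]: "c1 w1 = 1" "c2 w2 = 1"
  using basis basis' by (simp_all add: coord_def)

lemma coord_decomp: "z = of_real (c1 z) * w1 + of_real (c2 z) * w2"
proof -
  define K A B where "K = Im (w1 * cnj w2)" and "A = Im (z * cnj w2)" and "B = Im (z * cnj w1)"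
  have "of_real K * z = of_real A * w1 - of_real B * w2"
    unfolding K_def A_def B_def by (simp add: complex_eq_iff algebra_simps)
  moreover have "K \<noteq> 0"
    using basis by (simp add: K_def)
  ultimately have "z = of_real (A / K) * w1 + of_real (B / - K) * w2"
    by (simp add: field_simps)
  also have "A / K = c1 z"
    by (simp add: coord_def K_def A_def)
  also have "B / - K = c2 z"
    unfolding coord_def K_def B_def Im_cnj_swap[of w1 w2] by simp
  finally show ?thesis .
qed

lemma coord_lin_comb [simp]:
  "c1 (of_real s * w1 + of_real t * w2) = s" "c2 (of_real s * w1 + of_real t * w2) = t"
  by (simp_all add: coord_add)

lemma lattice_iff_coords: "z \<in> L \<longleftrightarrow> c1 z \<in> \<int> \<and> c2 z \<in> \<int>"
proof
  assume "z \<in> L"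
  then obtain m n :: int where "z = of_int m * w1 + of_int n * w2"
    by (auto simp: lattice_def)
  then show "c1 z \<in> \<int> \<and> c2 z \<in> \<int>"
    using coord_lin_comb[of "of_int m" "of_int n"] by simp
next
  assume "c1 z \<in> \<int> \<and> c2 z \<in> \<int>"
  then obtain m n where "c1 z = of_int m" "c2 z = of_int n"
    by (auto elim!: Ints_cases)
  with coord_decomp[of z] show "z \<in> L"
    by (auto simp: lattice_def)
qed

lemma zero_in_lattice [simp]: "0 \<in> L"
  by (simp add: lattice_iff_coords)

lemma lattice_add: "a \<in> L \<Longrightarrow> b \<in> L \<Longrightarrow> a + b \<in> L"
  by (simp add: lattice_iff_coords coord_add)

lemma lattice_diff: "a \<in> L \<Longrightarrow> b \<in> L \<Longrightarrow> a - b \<in> L"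
  by (simp add: lattice_iff_coords coord_diff)

lemma lattice_uminus: "a \<in> L \<Longrightarrow> - a \<in> L"
  using lattice_diff[of 0 a] by simp

lemma lat_cong_sym: "lat_cong w1 w2 a b \<Longrightarrow> lat_cong w1 w2 b a"
  unfolding lat_cong_def using lattice_uminus by fastforce

lemma lat_cong_trans: "lat_cong w1 w2 a b \<Longrightarrow> lat_cong w1 w2 b c \<Longrightarrow> lat_cong w1 w2 a c"
  unfolding lat_cong_def using lattice_add by fastforce

lemma bounded_imp_coords_bounded: "bounded B \<Longrightarrow> \<exists>M. \<forall>z\<in>B. \<bar>c1 z\<bar> \<le> M \<and> \<bar>c2 z\<bar> \<le> M"
proof -
  assume "bounded B"
  then obtain r where r: "\<And>z. z \<in> B \<Longrightarrow> norm z \<le> r"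
    by (auto simp: bounded_iff)
  obtain K1 K2 where K: "\<And>z. \<bar>c1 z\<bar> \<le> norm z * K1" "\<And>z. \<bar>c2 z\<bar> \<le> norm z * K2" "K1 > 0" "K2 > 0"
    using bounded_linear.pos_bounded[OF bounded_linear_coord] by (metis real_norm_def)
  have "\<bar>c1 z\<bar> \<le> r * (K1 + K2) \<and> \<bar>c2 z\<bar> \<le> r * (K1 + K2)" if "z \<in> B" for z
  proof -
    have "norm z * K1 \<le> r * (K1 + K2)" "norm z * K2 \<le> r * (K1 + K2)"
      using r[OF that] norm_ge_zero[of z] K(3,4) by (intro mult_mono; linarith)+
    then show ?thesis
      using K(1,2)[of z] by linarith
  qed
  then show ?thesis
    by blast
qed

lemma bounded_coord_box: "bounded {z. \<bar>c1 z\<bar> \<le> M \<and> \<bar>c2 z\<bar> \<le> M}"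
proof -
  have "norm z \<le> M * (norm w1 + norm w2)" if "\<bar>c1 z\<bar> \<le> M" "\<bar>c2 z\<bar> \<le> M" for z
  proof -
    have "norm z \<le> \<bar>c1 z\<bar> * norm w1 + \<bar>c2 z\<bar> * norm w2"
      using norm_triangle_ineq[of "of_real (c1 z) * w1" "of_real (c2 z) * w2"] coord_decomp[of z]
      by (simp add: norm_mult)
    also have "\<dots> \<le> M * norm w1 + M * norm w2"
      using that by (intro add_mono mult_right_mono) auto
    finally show ?thesis
      by (simp add: distrib_left)
  qed
  then show ?thesis
    by (auto simp: bounded_iff)
qed

lemma finite_lattice_inter_bounded: "bounded B \<Longrightarrow> finite (L \<inter> B)"
proof -
  assume "bounded B"
  then obtain M where M: "\<And>z. z \<in> B \<Longrightarrow> \<bar>c1 z\<bar> \<le> M \<and> \<bar>c2 z\<bar> \<le> M"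
    using bounded_imp_coords_bounded by blast
  define N where "N = \<lceil>M\<rceil>"
  have "L \<inter> B \<subseteq> (\<lambda>(m, n). of_int m * w1 + of_int n * w2) ` ({-N..N} \<times> {-N..N})"
  proof
    fix z assume z: "z \<in> L \<inter> B"
    then obtain m n where mn: "c1 z = of_int m" "c2 z = of_int n"
      by (auto simp: lattice_iff_coords elim!: Ints_cases)
    then have "m \<in> {-N..N}" "n \<in> {-N..N}"
      using M[of z] z unfolding N_def by (auto simp: abs_le_iff; linarith)+
    moreover have "z = of_int m * w1 + of_int n * w2"
      using coord_decomp[of z] mn by simp
    ultimately show "z \<in> (\<lambda>(m, n). of_int m * w1 + of_int n * w2) ` ({-N..N} \<times> {-N..N})"
      by force
  qed
  then show ?thesis
    by (rule finite_subset) auto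
qed

lemma closed_lattice: "closed L"
proof -
  have "L = c1 -` \<int> \<inter> c2 -` \<int>"
    by (auto simp: lattice_iff_coords)
  then show ?thesis
    using bounded_linear_coord
    by (auto intro!: continuous_closed_vimage closed_Ints linear_continuous_at)
qed

lemma connected_lattice_complement: "connected (- L)"
proof -
  have "L = (\<lambda>(m, n). of_int m * w1 + of_int n * w2) ` (UNIV :: (int \<times> int) set)"
    by (auto simp: lattice_def)
  then have "countable L"
    by simp
  then show ?thesis
    by (simp add: path_connected_complement_countable path_connected_imp_connected)
qed

lemma eventually_not_in_lattice: "eventually (\<lambda>w. w \<notin> L) (at x)"
proof -
  have "eventually (\<lambda>w. w \<notin> L \<inter> ball x 1) (at x)"
    using islimpt_finite[OF finite_lattice_inter_bounded[of "ball x 1"]]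
    by (simp add: islimpt_iff_eventually)
  moreover have "eventually (\<lambda>w. w \<in> ball x 1) (at x)"
    using eventually_at_in_open'[of "ball x 1" x] by simp
  ultimately show ?thesis
    by eventually_elim auto
qed

definition cell :: "complex \<Rightarrow> complex set" where
  "cell a = {p. c1 a < c1 p \<and> c1 p < c1 a + 1 \<and> c2 a < c2 p \<and> c2 p < c2 a + 1}"

definition closed_cell :: "complex \<Rightarrow> complex set" where
  "closed_cell a = {p. c1 a \<le> c1 p \<and> c1 p \<le> c1 a + 1 \<and> c2 a \<le> c2 p \<and> c2 p \<le> c2 a + 1}"

lemma cell_subset_closed_cell: "cell a \<subseteq> closed_cell a"
  by (auto simp: cell_def closed_cell_def)

lemma convex_cell: "convex (cell a)"
proof -
  have "cell a = c1 -` {c1 a<..<c1 a + 1} \<inter> c2 -` {c2 a<..<c2 a + 1}"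
    by (auto simp: cell_def)
  then show ?thesis
    by (simp add: convex_Int convex_linear_vimage linear_coord)
qed

lemma convex_closed_cell: "convex (closed_cell a)"
proof -
  have "closed_cell a = c1 -` {c1 a..c1 a + 1} \<inter> c2 -` {c2 a..c2 a + 1}"
    by (auto simp: closed_cell_def)
  then show ?thesis
    by (simp add: convex_Int convex_linear_vimage linear_coord)
qed

lemma bounded_closed_cell: "bounded (closed_cell a)"
proof -
  define M where "M = \<bar>c1 a\<bar> + \<bar>c2 a\<bar> + 1"
  have "closed_cell a \<subseteq> {z. \<bar>c1 z\<bar> \<le> M \<and> \<bar>c2 z\<bar> \<le> M}"
    by (auto simp: closed_cell_def M_def)
  then show ?thesis
    using bounded_coord_box bounded_subset by blast
qed

lemma lattice_translate_into_closed_cell: "\<exists>l\<in>L. z - l \<in> closed_cell a"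
proof
  define l where "l = of_int \<lfloor>c1 z - c1 a\<rfloor> * w1 + of_int \<lfloor>c2 z - c2 a\<rfloor> * w2"
  show "l \<in> L"
    by (auto simp: l_def lattice_def)
  have "c1 l = \<lfloor>c1 z - c1 a\<rfloor>" "c2 l = \<lfloor>c2 z - c2 a\<rfloor>"
    using coord_lin_comb[of "of_int _" "of_int _"] by (simp_all add: l_def)
  then show "z - l \<in> closed_cell a"
    by (simp add: closed_cell_def coord_diff) linarith
qed

lemma cell_lattice_inj: "p \<in> cell a \<Longrightarrow> q \<in> cell a \<Longrightarrow> p - q \<in> L \<Longrightarrow> p = q"
proof -
  assume "p \<in> cell a" "q \<in> cell a" "p - q \<in> L"
  then have "c1 p - c1 q \<in> \<int>" "\<bar>c1 p - c1 q\<bar> < 1" "c2 p - c2 q \<in> \<int>" "\<bar>c2 p - c2 q\<bar> < 1"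
    by (auto simp: lattice_iff_coords coord_diff cell_def)
  then have "c1 p = c1 q" "c2 p = c2 q"
    by (auto dest: Ints_nonzero_abs_less1)
  then show "p = q"
    by (metis coord_decomp)
qed

lemma lattice_inter_cell:
  assumes "c1 a \<in> {-1<..<0}" "c2 a \<in> {-1<..<0}"
  shows "L \<inter> cell a = {0}"
proof -
  have "l = 0" if "l \<in> L" "l \<in> cell a" for l
  proof -
    have "c1 l \<in> \<int>" "\<bar>c1 l\<bar> < 1" "c2 l \<in> \<int>" "\<bar>c2 l\<bar> < 1"
      using that assms by (auto simp: lattice_iff_coords cell_def)
    then have "c1 l = 0" "c2 l = 0"
      by (auto dest: Ints_nonzero_abs_less1)
    then show ?thesis
      by (metis coord_decomp coord_0)
  qed
  moreover have "0 \<in> cell a"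
    using assms by (simp add: cell_def)
  ultimately show ?thesis
    by auto
qed

lemma cell_boundary_coords:
  "p \<in> closed_cell a - cell a \<Longrightarrow> c1 p \<in> {c1 a, c1 a + 1} \<or> c2 p \<in> {c2 a, c2 a + 1}"
  by (auto simp: cell_def closed_cell_def)

lemma lattice_disjoint_cell_boundary:
  assumes "c1 a \<notin> \<int>" "c2 a \<notin> \<int>"
  shows "L \<inter> (closed_cell a - cell a) = {}"
proof -
  have "c1 a + 1 \<notin> \<int>" "c2 a + 1 \<notin> \<int>"
    using assms by (metis Ints_1 Ints_diff add_diff_cancel)+
  then show ?thesis
    using assms cell_boundary_coords by (fastforce simp: lattice_iff_coords)
qed

definition cell_path :: "complex \<Rightarrow> real \<Rightarrow> complex" where
  "cell_path a = linepath a (a + w1) +++ linepath (a + w1) (a + w1 + w2)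
                   +++ linepath (a + w1 + w2) (a + w2) +++ linepath (a + w2) a"

lemma valid_path_cell_path: "valid_path (cell_path a)"
  by (simp add: cell_path_def)

lemma cell_path_loop: "pathfinish (cell_path a) = pathstart (cell_path a)"
  by (simp add: cell_path_def)

lemma path_image_cell_path: "path_image (cell_path a) \<subseteq> closed_cell a - cell a"
proof -
  have side: "closed_segment x y \<subseteq> closed_cell a \<inter> f -` {t}"
    if "x \<in> closed_cell a" "y \<in> closed_cell a" "f x = t" "f y = t" "f = c1 \<or> f = c2" for x y f t
  proof (rule closed_segment_subset)
    show "convex (closed_cell a \<inter> f -` {t})"
      using that(5) by (auto intro!: convex_Int convex_closed_cell convex_linear_vimage linear_coord)
  qed (use that in auto)
  have "closed_segment a (a + w1) \<subseteq> closed_cell a \<inter> c2 -` {c2 a}"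
    "closed_segment (a + w1) (a + w1 + w2) \<subseteq> closed_cell a \<inter> c1 -` {c1 a + 1}"
    "closed_segment (a + w1 + w2) (a + w2) \<subseteq> closed_cell a \<inter> c2 -` {c2 a + 1}"
    "closed_segment (a + w2) a \<subseteq> closed_cell a \<inter> c1 -` {c1 a}"
    by (rule side; simp add: closed_cell_def coord_add)+
  then have "path_image (cell_path a) \<subseteq> closed_cell a \<inter>
          (c2 -` {c2 a} \<union> c1 -` {c1 a + 1} \<union> c2 -` {c2 a + 1} \<union> c1 -` {c1 a})"
    by (auto simp: cell_path_def path_image_join)
  also have "\<dots> \<subseteq> closed_cell a - cell a"
    by (auto simp: cell_def)
  finally show ?thesis .
qed

lemma winding_number_cell_path:
  "\<exists>k. k \<noteq> 0 \<and> (\<forall>p\<in>cell a. winding_number (cell_path a) p = k)"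
proof -
  define b c d where "b = a + w1" and "c = a + w1 + w2" and "d = a + w2"
  define p0 where "p0 = a + of_real (1/2) * w1 + of_real (1/2) * w2"
  define K where "K = Im (w1 * cnj w2)"
  have path: "path (cell_path a)"
    by (simp add: valid_path_cell_path valid_path_imp_path)
  have off_path: "cell a \<inter> path_image (cell_path a) = {}"
    using path_image_cell_path by blast
  have "c1 p0 = c1 a + 1/2" "c2 p0 = c2 a + 1/2"
    unfolding p0_def coord_add coord_of_real_mult by simp_all
  then have "p0 \<in> cell a"
    by (simp add: cell_def)
  then have const: "\<forall>p\<in>cell a. winding_number (cell_path a) p = winding_number (cell_path a) p0"
    using winding_number_constant[OF path cell_path_loop convex_connected[OF convex_cell] off_path]
    by (auto simp: constant_on_def)
  have "p0 \<notin> path_image (cell_path a)"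
    using \<open>p0 \<in> cell a\<close> off_path by blast
  then have wn: "winding_number (cell_path a) p0 = winding_number (linepath a b) p0
      + (winding_number (linepath b c) p0 + (winding_number (linepath c d) p0
      + winding_number (linepath d a) p0))"
    by (simp add: cell_path_def b_def c_def d_def winding_number_join path_image_join)
  \<comment> \<open>Seen from the centre, all four sides turn in the direction given by the sign of K.\<close>
  have sides: "Im ((b - a) * cnj (b - p0)) = - K / 2" "Im ((c - b) * cnj (c - p0)) = - K / 2"
    "Im ((d - c) * cnj (d - p0)) = - K / 2" "Im ((a - d) * cnj (a - p0)) = - K / 2"
    by (simp_all add: b_def c_def d_def p0_def K_def field_simps)
  show ?thesis
  proof (cases "K < 0")
    case True
    then have "0 < Re (winding_number (cell_path a) p0)"
      using sides unfolding wn by (simp add: add_pos_pos winding_number_linepath_pos_lt)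
    then show ?thesis
      using const by (intro exI[of _ "winding_number (cell_path a) p0"]) auto
  next
    case False
    then have "K > 0"
      using basis by (simp add: K_def)
    moreover have "Im ((a - b) * cnj (a - p0)) = K / 2" "Im ((b - c) * cnj (b - p0)) = K / 2"
      "Im ((c - d) * cnj (c - p0)) = K / 2" "Im ((d - a) * cnj (d - p0)) = K / 2"
      by (simp_all add: b_def c_def d_def p0_def K_def field_simps)
    ultimately have "Re (winding_number (cell_path a) p0) < 0"
      unfolding wn by (simp add: add_neg_neg winding_number_linepath_neg_lt)
    then show ?thesis
      using const by (intro exI[of _ "winding_number (cell_path a) p0"]) auto
  qed
qed

lemma contour_integral_cell_path_periodic:
  assumes per: "\<And>u. F (u + w1) = F u" "\<And>u. F (u + w2) = F u"
    and cont: "continuous_on (path_image (cell_path a)) F"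
  shows "contour_integral (cell_path a) F = 0"
proof -
  have shift: "contour_integral (linepath (x + l) (y + l)) F = contour_integral (linepath x y) F"
    if "\<And>u. F (u + l) = F u" for x y l
  proof -
    have "linepath (x + l) (y + l) t = linepath x y t + l" for t
      by (simp add: linepath_def algebra_simps)
    then show ?thesis
      using that by (simp add: contour_integral_integral)
  qed
  have reverse: "contour_integral (linepath y x) F = - contour_integral (linepath x y) F" for x y
    using contour_integral_reversepath[OF valid_path_linepath, of x y F] by simp
  \<comment> \<open>Opposite sides are translates of each other, traversed in opposite directions.\<close>
  have right: "contour_integral (linepath (a + w1) (a + w1 + w2)) F = contour_integral (linepath a (a + w2)) F"
    using shift[where x = a and y = "a + w2" and l = w1] per(1) by (simp add: add_ac)
  have top: "contour_integral (linepath (a + w1 + w2) (a + w2)) F = - contour_integral (linepath a (a + w1)) F"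
    using shift[where x = "a + w1" and y = a and l = w2] per(2) reverse by metis
  have "F contour_integrable_on linepath a (a + w1)"
    "F contour_integrable_on linepath (a + w1) (a + w1 + w2)"
    "F contour_integrable_on linepath (a + w1 + w2) (a + w2)"
    "F contour_integrable_on linepath (a + w2) a"
    using cont by (auto simp: cell_path_def path_image_join
        intro!: contour_integrable_continuous_linepath elim: continuous_on_subset)
  then show ?thesis
    by (simp add: cell_path_def contour_integrable_joinI valid_path_join right top reverse[of "a + w2"])
qed

end

lemma periodic_of_int:
  fixes f :: "'a::ring_1 \<Rightarrow> 'b"
  assumes per: "\<And>w. f (w + c) = f w"
  shows "f (w + of_int m * c) = f w"
proof -
  have nat: "f (w + of_nat n * c) = f w" for w n
  proof (induction n)
    case (Suc n)
    have "f (w + of_nat (Suc n) * c) = f ((w + of_nat n * c) + c)"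
      by (simp add: algebra_simps)
    also have "\<dots> = f w"
      using per Suc.IH by simp
    finally show ?case .
  qed simp
  show ?thesis
  proof (cases "m \<ge> 0")
    case True
    then show ?thesis
      using nat[of w "nat m"] by simp
  next
    case False
    then have "f (w + of_int m * c) = f (w + of_int m * c + of_nat (nat (- m)) * c)"
      using nat by presburger
    then show ?thesis
      using False by (simp add: algebra_simps)
  qed
qed

lemma sum_eq_five_three_one_one:
  fixes f :: "'a \<Rightarrow> int"
  assumes "finite A" "a \<in> A" "b \<in> A" "c \<in> A" "distinct [a, b, c]"
    and "\<And>p. p \<in> A \<Longrightarrow> 1 \<le> f p" "f a = 3" "(\<Sum>p\<in>A. f p) = 5"
  shows "f b = 1 \<and> f c = 1 \<and> A = {a, b, c}"
proof -
  define B where "B = {a, b, c}"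
  have "B \<subseteq> A"
    using assms by (simp add: B_def)
  then have "(\<Sum>p\<in>A. f p) = f a + f b + f c + (\<Sum>p\<in>A - B. f p)"
    using sum.subset_diff[of B A f] assms(1,5) by (simp add: B_def)
  moreover have "int (card (A - B)) \<le> (\<Sum>p\<in>A - B. f p)"
    using sum_mono[of "A - B" "\<lambda>_. 1" f] assms(6) by simp
  moreover have "1 \<le> f b" "1 \<le> f c"
    using assms by simp_all
  ultimately have "f b = 1" "f c = 1" "card (A - B) = 0"
    using assms(7,8) by linarith+
  then show ?thesis
    using \<open>B \<subseteq> A\<close> assms(1) by (auto simp: B_def)
qed

locale elliptic_function = lattice_basis +
  fixes g :: "complex \<Rightarrow> complex"
  assumes periodic1: "g (w + w1) = g w"
    and periodic2: "g (w + w2) = g w"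
    and holomorphic: "g holomorphic_on - L"
    and pole_0: "is_pole g 0"
begin

lemma periodic_lattice: "l \<in> L \<Longrightarrow> g (w + l) = g w"
  using periodic_of_int[of g w1, OF periodic1] periodic_of_int[of g w2, OF periodic2]
  by (auto simp: lattice_def add.assoc[symmetric])

lemma lat_cong_eq: "lat_cong w1 w2 a b \<Longrightarrow> g a = g b"
  using periodic_lattice[of "a - b" b] by (simp add: lat_cong_def)

lemma zorder_lat_cong: "lat_cong w1 w2 a b \<Longrightarrow> zorder g a = zorder g b"
proof -
  assume "lat_cong w1 w2 a b"
  then have "g (u + a) = g (u + b)" for u
    using periodic_lattice[of "a - b" "u + b"] by (simp add: lat_cong_def algebra_simps)
  then show ?thesis
    using zorder_shift[of g a] zorder_shift[of g b] by simp
qed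

lemma deriv_periodic_lattice: "l \<in> L \<Longrightarrow> deriv g (w + l) = deriv g w"
proof -
  assume "l \<in> L"
  then have "(\<lambda>u. g (u + l)) = g"
    using periodic_lattice by auto
  then show ?thesis
    using DERIV_shift[of g _ w l] by (simp add: deriv_def)
qed

lemma is_pole_lattice: "l \<in> L \<Longrightarrow> is_pole g l"
proof -
  assume "l \<in> L"
  then have "(\<lambda>u. g (l + u)) = g"
    using periodic_lattice[of l] by (simp add: add.commute)
  then show ?thesis
    using pole_0 is_pole_shift_0[of g l] by simp
qed

(* The value of g on the lattice is junk (g has poles there), hence the exclusion. *)
definition zeros :: "complex set" where
  "zeros = {w. w \<notin> L \<and> g w = 0}"

lemma eventually_nonzero_lattice: "l \<in> L \<Longrightarrow> eventually (\<lambda>w. g w \<noteq> 0) (at l)"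
  using is_pole_lattice unfolding is_pole_def by (rule filterlim_at_infinity_imp_eventually_ne)

lemma zeros_not_islimpt: "\<not> x islimpt zeros"
proof (cases "x \<in> L")
  case True
  have "eventually (\<lambda>w. w \<notin> zeros) (at x)"
    using eventually_nonzero_lattice[OF True] by eventually_elim (simp add: zeros_def)
  then show ?thesis
    by (simp add: islimpt_iff_eventually)
next
  case False
  show ?thesis
  proof
    assume limit: "x islimpt zeros"
    \<comment> \<open>Identity theorem on the connected open set - L; the pole at 0 then gives a contradiction.\<close>
    have vanishes: "g w = 0" if "w \<in> - L" for w
      by (rule analytic_continuation[OF holomorphic _ connected_lattice_complement _ _ limit])
        (use False that closed_lattice in \<open>auto simp: zeros_def\<close>)
    have "eventually (\<lambda>w. g w \<noteq> 0 \<and> w \<notin> L) (at 0)"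
      using eventually_nonzero_lattice[OF zero_in_lattice] eventually_not_in_lattice
      by (rule eventually_conj)
    then have "eventually (\<lambda>w. False) (at (0::complex))"
      by eventually_elim (use vanishes in auto)
    then show False
      by (simp add: trivial_limit_at)
  qed
qed

lemma closed_zeros: "closed zeros"
  using zeros_not_islimpt closed_limpt by blast

lemma finite_zeros_inter_bounded: "bounded B \<Longrightarrow> finite (zeros \<inter> B)"
  using finite_not_islimpt_in_compact[of "closure B" zeros] zeros_not_islimpt closure_subset
  by (metis compact_closure finite_subset inf.commute inf_mono order_refl)

lemma even_pole_order_if_even:
  assumes even_fun: "\<And>w. w \<notin> L \<Longrightarrow> g (- w) = g w"
  shows "even (zorder g 0)"
proof -
  define n where "n = nat (- zorder g 0)"
  define h where "h = zor_poly g 0"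
  obtain \<rho> where "\<rho> > 0" and \<rho>: "\<And>w. w \<in> ball 0 \<rho> \<Longrightarrow> w \<noteq> 0 \<Longrightarrow> w \<notin> L"
    using eventually_not_in_lattice[of 0] by (auto simp: eventually_at dist_commute)
  have hol: "g holomorphic_on ball 0 \<rho> - {0}"
    using holomorphic by (rule holomorphic_on_subset) (use \<rho> in auto)
  have "zorder g 0 < 0 \<and> h 0 \<noteq> 0 \<and> (\<exists>r>0. cball (0::complex) r \<subseteq> ball 0 \<rho> \<and> h holomorphic_on cball 0 r
      \<and> (\<forall>w\<in>cball 0 r - {0}. g w = h w / (w - 0) ^ nat (- zorder g 0) \<and> h w \<noteq> 0))"
    using zorder_exist_pole[OF hol open_ball _ pole_0] \<open>\<rho> > 0\<close> unfolding h_def by simp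
  then obtain r where "zorder g 0 < 0" "h 0 \<noteq> 0" "r > 0" and r: "cball (0::complex) r \<subseteq> ball 0 \<rho>"
    and h_cont: "h holomorphic_on cball 0 r"
    and g_eq: "\<forall>w\<in>cball 0 r - {0}. g w = h w / w ^ n"
    unfolding n_def by auto
  \<comment> \<open>In g w = h w / w^n, evenness of g forces h(-w) = (-1)^n h w, and h 0 \<noteq> 0.\<close>
  have "eventually (\<lambda>w. w \<in> ball 0 r - {0}) (at (0::complex))"
    using eventually_at_in_open[of "ball 0 r" "0::complex"] \<open>r > 0\<close> by (simp add: dist_norm)
  then have symmetric: "eventually (\<lambda>w. h (- w) = (-1) ^ n * h w) (at 0)"
  proof eventually_elim
    case (elim w)
    then have "w \<in> cball 0 r - {0}" "- w \<in> cball 0 r - {0}"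
      by auto
    moreover have "w \<notin> L"
      using \<rho>[of w] subsetD[OF r, of w] elim by auto
    ultimately
    have "h (- w) / (- w) ^ n = h w / w ^ n"
      using even_fun[of w] g_eq by simp
    moreover have "(- w) ^ n = (-1) ^ n * w ^ n"
      by (rule power_minus)
    ultimately show ?case
      using elim by (simp add: divide_eq_eq)
  qed
  have "isCont h 0"
    using continuous_on_interior[OF holomorphic_on_imp_continuous_on[OF h_cont]] \<open>r > 0\<close> by simp
  then have "isCont (\<lambda>w. h (- w)) 0"
    using isCont_o2[where f = uminus and a = 0 and g = h] by simp
  then have "((\<lambda>w. h (- w)) \<longlongrightarrow> h 0) (at 0)"
    by (simp add: isCont_def)
  then have "((\<lambda>w. (-1) ^ n * h w) \<longlongrightarrow> h 0) (at 0)"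
    using symmetric by (rule Lim_transform_eventually)
  moreover have "((\<lambda>w. (-1) ^ n * h w) \<longlongrightarrow> (-1) ^ n * h 0) (at 0)"
    using \<open>isCont h 0\<close> by (simp add: isCont_def tendsto_mult_left)
  ultimately have "(-1) ^ n * h 0 = h 0"
    using tendsto_unique[OF trivial_limit_at] by blast
  then have "even n"
    using \<open>h 0 \<noteq> 0\<close> by (cases "even n") auto
  then show ?thesis
    using \<open>zorder g 0 < 0\<close> by (simp add: n_def even_nat_iff)
qed

lemma odd_vanishes_at_two_torsion:
  assumes odd_fun: "\<And>w. w \<notin> L \<Longrightarrow> g (- w) = - g w"
    and "2 * t \<in> L" "t \<notin> L"
  shows "g t = 0"
proof -
  have "g t = g (- t + 2 * t)"
    by simp
  also have "\<dots> = g (- t)"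
    using periodic_lattice[OF \<open>2 * t \<in> L\<close>] by blast
  also have "\<dots> = - g t"
    using odd_fun[OF \<open>t \<notin> L\<close>] .
  finally show ?thesis
    by simp
qed

lemma contour_integral_logderiv_cell_path:
  assumes "zeros \<inter> (closed_cell a - cell a) = {}" "L \<inter> (closed_cell a - cell a) = {}"
  shows "contour_integral (cell_path a) (\<lambda>w. deriv g w / g w) = 0"
proof (rule contour_integral_cell_path_periodic)
  show "deriv g (u + w1) / g (u + w1) = deriv g u / g u" "deriv g (u + w2) / g (u + w2) = deriv g u / g u" for u
    using deriv_periodic_lattice periodic_lattice lattice_iff_coords by simp_all
  define U where "U = - (L \<union> zeros)"
  have "open U"
    using closed_lattice closed_zeros by (auto simp: U_def)
  moreover have "g holomorphic_on U"
    using holomorphic by (rule holomorphic_on_subset) (auto simp: U_def)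
  ultimately have "(\<lambda>w. deriv g w / g w) holomorphic_on U"
    by (intro holomorphic_intros holomorphic_deriv) (auto simp: U_def zeros_def)
  moreover have "path_image (cell_path a) \<subseteq> U"
    using path_image_cell_path assms by (auto simp: U_def)
  ultimately show "continuous_on (path_image (cell_path a)) (\<lambda>w. deriv g w / g w)"
    using holomorphic_on_imp_continuous_on continuous_on_subset by blast
qed

lemma sum_zorder_cell:
  assumes zeros_off: "zeros \<inter> (closed_cell a - cell a) = {}"
    and lattice_off: "L \<inter> (closed_cell a - cell a) = {}"
  shows "(\<Sum>p\<in>(zeros \<union> L) \<inter> cell a. zorder g p) = 0"
proof -
  define \<gamma> where "\<gamma> = cell_path a"
  obtain R where R: "closed_cell a \<subseteq> ball 0 R"
    using bounded_subset_ballD[OF bounded_closed_cell] by blast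
  define pz where "pz = {w \<in> ball 0 R. g w = 0 \<or> w \<in> L}"
  have pz_eq: "pz = (zeros \<union> L) \<inter> ball 0 R"
    by (auto simp: pz_def zeros_def)
  have "finite pz"
    unfolding pz_eq using finite_zeros_inter_bounded finite_lattice_inter_bounded
    by (simp add: Int_Un_distrib2)
  have path_pz: "path_image \<gamma> \<subseteq> ball 0 R - pz"
    using path_image_cell_path[of a] R zeros_off lattice_off unfolding \<gamma>_def pz_eq by blast
  have outside: "winding_number \<gamma> p = 0" if "p \<notin> closed_cell a" for p
    unfolding \<gamma>_def
    by (rule winding_number_zero_outside[OF valid_path_imp_path[OF valid_path_cell_path]
          convex_closed_cell cell_path_loop that]) (use path_image_cell_path[of a] in blast)
  then have outside_ball: "\<forall>p. p \<notin> ball 0 R \<longrightarrow> winding_number \<gamma> p = 0"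
    using R by blast
  have "contour_integral \<gamma> (\<lambda>w. deriv g w * 1 / g w)
          = 2 * pi * \<i> * (\<Sum>p\<in>pz. winding_number \<gamma> p * 1 * zorder g p)"
    unfolding pz_def
  proof (rule argument_principle)
    show "g holomorphic_on ball 0 R - L"
      using holomorphic by (rule holomorphic_on_subset) auto
  qed (use \<open>finite pz\<close> path_pz outside_ball is_pole_lattice in
      \<open>auto simp: \<gamma>_def valid_path_cell_path cell_path_loop pz_def\<close>)
  then have "(\<Sum>p\<in>pz. winding_number \<gamma> p * zorder g p) = 0"
    using contour_integral_logderiv_cell_path[OF zeros_off lattice_off] by (simp add: \<gamma>_def)
  moreover obtain k where "k \<noteq> 0" and k: "\<forall>p\<in>cell a. winding_number \<gamma> p = k"
    using winding_number_cell_path by (auto simp: \<gamma>_def)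
  moreover have "(\<Sum>p\<in>pz. winding_number \<gamma> p * zorder g p) = k * (\<Sum>p\<in>pz \<inter> cell a. zorder g p)"
  proof -
    have "winding_number \<gamma> p * zorder g p = 0" if "p \<in> pz - cell a" for p
    proof -
      have "p \<notin> closed_cell a"
        using that zeros_off lattice_off by (auto simp: pz_eq)
      then show ?thesis
        using outside by simp
    qed
    then have "(\<Sum>p\<in>pz. winding_number \<gamma> p * zorder g p) = (\<Sum>p\<in>pz \<inter> cell a. winding_number \<gamma> p * zorder g p)"
      by (intro sum.mono_neutral_right \<open>finite pz\<close>) auto
    then show ?thesis
      using k by (simp add: sum_distrib_left)
  qed
  moreover have "pz \<inter> cell a = (zeros \<union> L) \<inter> cell a"
    using R cell_subset_closed_cell by (auto simp: pz_eq)
  ultimately show ?thesis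
    by (metis mult_eq_0_iff of_int_eq_0_iff)
qed

lemma exists_cell_avoiding_zeros:
  "\<exists>a. c1 a \<in> {-1<..<0} \<and> c2 a \<in> {-1<..<0} \<and> zeros \<inter> (closed_cell a - cell a) = {}"
proof -
  define Z where "Z = zeros \<inter> {z. \<bar>c1 z\<bar> \<le> 1 \<and> \<bar>c2 z\<bar> \<le> 1}"
  have "finite Z"
    unfolding Z_def using bounded_coord_box by (rule finite_zeros_inter_bounded)
  have avoid: "\<exists>t. t \<in> {-1<..<0} \<and> t \<notin> F" if "finite F" for F :: "real set"
  proof -
    have "infinite ({-1<..<0::real} - F)"
      using Diff_infinite_finite[OF that] by simp
    then show ?thesis
      using infinite_imp_nonempty by blast
  qed
  \<comment> \<open>A zero on the boundary of a cell with such a corner lies in Z, so it suffices to avoid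
      finitely many values of each coordinate.\<close>
  obtain \<alpha> where \<alpha>: "\<alpha> \<in> {-1<..<0}" "\<alpha> \<notin> c1 ` Z \<union> (\<lambda>z. c1 z - 1) ` Z"
    using avoid[of "c1 ` Z \<union> (\<lambda>z. c1 z - 1) ` Z"] \<open>finite Z\<close> by blast
  obtain \<beta> where \<beta>: "\<beta> \<in> {-1<..<0}" "\<beta> \<notin> c2 ` Z \<union> (\<lambda>z. c2 z - 1) ` Z"
    using avoid[of "c2 ` Z \<union> (\<lambda>z. c2 z - 1) ` Z"] \<open>finite Z\<close> by blast
  define a where "a = of_real \<alpha> * w1 + of_real \<beta> * w2"
  have a: "c1 a = \<alpha>" "c2 a = \<beta>"
    by (simp_all add: a_def)
  have "p \<notin> zeros" if boundary: "p \<in> closed_cell a - cell a" for p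
  proof
    assume "p \<in> zeros"
    moreover have "\<bar>c1 p\<bar> \<le> 1" "\<bar>c2 p\<bar> \<le> 1"
      using boundary \<alpha>(1) \<beta>(1) by (auto simp: a closed_cell_def)
    ultimately have "p \<in> Z"
      by (simp add: Z_def)
    consider "c1 p = \<alpha>" | "c1 p = \<alpha> + 1" | "c2 p = \<beta>" | "c2 p = \<beta> + 1"
      using cell_boundary_coords[OF boundary] unfolding a by auto
    then show False
      using \<open>p \<in> Z\<close> \<alpha>(2) \<beta>(2) by cases (auto simp: image_iff)
  qed
  then have "zeros \<inter> (closed_cell a - cell a) = {}"
    by blast
  with \<alpha>(1) \<beta>(1) a show ?thesis
    by auto
qed

lemma zero_representatives:
  obtains A where "finite A" "A \<subseteq> zeros"
    and "\<And>w. w \<in> zeros \<Longrightarrow> \<exists>r\<in>A. lat_cong w1 w2 w r"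
    and "\<And>p q. p \<in> A \<Longrightarrow> q \<in> A \<Longrightarrow> lat_cong w1 w2 p q \<Longrightarrow> p = q"
    and "(\<Sum>p\<in>A. zorder g p) = - zorder g 0"
proof -
  obtain a where a: "c1 a \<in> {-1<..<0}" "c2 a \<in> {-1<..<0}"
    and zeros_off: "zeros \<inter> (closed_cell a - cell a) = {}"
    using exists_cell_avoiding_zeros by blast
  have "c1 a \<notin> \<int>" "c2 a \<notin> \<int>"
    using a by (auto dest: Ints_nonzero_abs_less1)
  then have lattice_off: "L \<inter> (closed_cell a - cell a) = {}"
    by (rule lattice_disjoint_cell_boundary)
  define A where "A = zeros \<inter> cell a"
  have "finite A"
    using finite_zeros_inter_bounded[OF bounded_closed_cell[of a]] cell_subset_closed_cell
    unfolding A_def by (meson finite_subset inf_mono order_refl)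
  moreover have "A \<subseteq> zeros"
    by (simp add: A_def)
  moreover have "\<exists>r\<in>A. lat_cong w1 w2 w r" if "w \<in> zeros" for w
  proof -
    obtain l where "l \<in> L" and l: "w - l \<in> closed_cell a"
      using lattice_translate_into_closed_cell by blast
    then have "w - l \<in> zeros"
      using that periodic_lattice[OF lattice_uminus, of l w] lattice_add[of "w - l" l]
      by (auto simp: zeros_def)
    then have "w - l \<in> A"
      using l zeros_off by (auto simp: A_def)
    moreover have "lat_cong w1 w2 w (w - l)"
      using \<open>l \<in> L\<close> by (simp add: lat_cong_def)
    ultimately show ?thesis
      by blast
  qed
  moreover have "p = q" if "p \<in> A" "q \<in> A" "lat_cong w1 w2 p q" for p q
    using that cell_lattice_inj by (auto simp: A_def lat_cong_def)
  moreover have "(\<Sum>p\<in>A. zorder g p) = - zorder g 0"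
  proof -
    have "(zeros \<union> L) \<inter> cell a = insert 0 A" "0 \<notin> A"
      using lattice_inter_cell[OF a] by (auto simp: A_def zeros_def)
    then show ?thesis
      using sum_zorder_cell[OF zeros_off lattice_off] \<open>finite A\<close> by simp
  qed
  ultimately show ?thesis
    using that by blast
qed

lemma zeros_of_degree_five_with_triple_zero:
  assumes "zorder g 0 = -5"
    and positive: "\<And>w. w \<in> zeros \<Longrightarrow> 1 \<le> zorder g w"
    and zeros: "Q \<in> zeros" "R \<in> zeros" "S \<in> zeros"
    and incongruent: "\<not> lat_cong w1 w2 Q R" "\<not> lat_cong w1 w2 Q S" "\<not> lat_cong w1 w2 R S"
    and "zorder g Q = 3"
  shows "zorder g R = 1 \<and> zorder g S = 1 \<and>
    (\<forall>w\<in>zeros. lat_cong w1 w2 w Q \<or> lat_cong w1 w2 w R \<or> lat_cong w1 w2 w S)"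
proof -
  obtain A where A: "finite A" "A \<subseteq> zeros" "\<And>w. w \<in> zeros \<Longrightarrow> \<exists>r\<in>A. lat_cong w1 w2 w r"
    and "(\<Sum>p\<in>A. zorder g p) = 5"
    using zero_representatives \<open>zorder g 0 = -5\<close> by (metis minus_minus)
  obtain rQ rR rS where reps: "rQ \<in> A" "rR \<in> A" "rS \<in> A"
    and cong: "lat_cong w1 w2 Q rQ" "lat_cong w1 w2 R rR" "lat_cong w1 w2 S rS"
    using A(3) zeros by meson
  have same_rep: "lat_cong w1 w2 u v" if "lat_cong w1 w2 u r" "lat_cong w1 w2 v r" for u v r
    using lat_cong_trans[OF that(1) lat_cong_sym[OF that(2)]] .
  have "distinct [rQ, rR, rS]"
    using incongruent same_rep[OF cong(1)] same_rep[OF cong(2)] cong by auto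
  moreover have "zorder g rQ = 3"
    using zorder_lat_cong[OF cong(1)] \<open>zorder g Q = 3\<close> by simp
  ultimately have "zorder g rR = 1 \<and> zorder g rS = 1 \<and> A = {rQ, rR, rS}"
    using sum_eq_five_three_one_one[OF A(1) reps] positive A(2) \<open>(\<Sum>p\<in>A. zorder g p) = 5\<close>
    by blast
  moreover have "lat_cong w1 w2 w Q \<or> lat_cong w1 w2 w R \<or> lat_cong w1 w2 w S" if "w \<in> zeros" for w
    using A(3)[OF that] calculation same_rep cong by blast
  ultimately show ?thesis
    using zorder_lat_cong[OF cong(2)] zorder_lat_cong[OF cong(3)] by simp
qed

end

theorem lemma4p10:
  fixes w1 w2 :: complex and g :: "complex \<Rightarrow> complex" and x y z Q R S :: complex
  assumes lin_indep: "Im (w2 / w1) \<noteq> 0"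
    and per1: "\<And>w. g (w + w1) = g w"
    and per2: "\<And>w. g (w + w2) = g w"
    and holo: "g holomorphic_on (- lattice w1 w2)"
    and pole: "is_pole g 0"
    and pole_order: "zorder g 0 = -5"
    and ram_pts: "x \<notin> lattice w1 w2" "y \<notin> lattice w1 w2" "z \<notin> lattice w1 w2"
    and ram_distinct: "\<not> lat_cong w1 w2 x y" "\<not> lat_cong w1 w2 x z" "\<not> lat_cong w1 w2 y z"
    and ram: "\<And>w. w \<notin> lattice w1 w2 \<Longrightarrow>
        zorder (\<lambda>u. g u - g w) w =
          (if lat_cong w1 w2 w x \<or> lat_cong w1 w2 w y \<or> lat_cong w1 w2 w z then 3 else 1)"
    and sym: "(\<forall>w. w \<notin> lattice w1 w2 \<longrightarrow> g (- w) = g w) \<or>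
              (\<forall>w. w \<notin> lattice w1 w2 \<longrightarrow> g (- w) = - g w)"
    and two_torsion: "2 * Q \<in> lattice w1 w2" "2 * R \<in> lattice w1 w2" "2 * S \<in> lattice w1 w2"
    and nonzero: "Q \<notin> lattice w1 w2" "R \<notin> lattice w1 w2" "S \<notin> lattice w1 w2"
    and QRS_distinct: "\<not> lat_cong w1 w2 Q R" "\<not> lat_cong w1 w2 Q S" "\<not> lat_cong w1 w2 R S"
    and xQ: "x = Q"
    and gQ: "g Q = 0"
  shows "zorder g Q = 3 \<and> zorder g R = 1 \<and> zorder g S = 1 \<and>
         (\<forall>w. w \<notin> lattice w1 w2 \<longrightarrow>
            (g w = 0 \<longleftrightarrow> lat_cong w1 w2 w Q \<or> lat_cong w1 w2 w R \<or> lat_cong w1 w2 w S))"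
proof -
  have "Im (w1 * cnj w2) \<noteq> 0"
    using lin_indep Im_mult_cnj_ne_0_iff by blast
  then interpret elliptic_function w1 w2 g
    by unfold_locales (use per1 per2 holo pole in auto)
  have odd: "\<And>w. w \<notin> L \<Longrightarrow> g (- w) = - g w"
    using sym even_pole_order_if_even pole_order by auto
  have QRS_zeros: "Q \<in> zeros" "R \<in> zeros" "S \<in> zeros"
    using gQ nonzero two_torsion odd_vanishes_at_two_torsion[OF odd] by (auto simp: zeros_def)
  have order: "zorder g w = (if lat_cong w1 w2 w x \<or> lat_cong w1 w2 w y \<or> lat_cong w1 w2 w z then 3 else 1)"
    if "w \<in> zeros" for w
    using ram[of w] that by (simp add: zeros_def)
  have "zorder g Q = 3"
    using order[OF QRS_zeros(1)] xQ by (simp add: lat_cong_def)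
  moreover have "1 \<le> zorder g w" if "w \<in> zeros" for w
    using order[OF that] by simp
  ultimately have "zorder g R = 1 \<and> zorder g S = 1 \<and>
      (\<forall>w\<in>zeros. lat_cong w1 w2 w Q \<or> lat_cong w1 w2 w R \<or> lat_cong w1 w2 w S)"
    using zeros_of_degree_five_with_triple_zero[OF pole_order _ QRS_zeros QRS_distinct] by blast
  moreover have "g w = 0 \<longleftrightarrow> w \<in> zeros" if "w \<notin> L" for w
    using that by (simp add: zeros_def)
  ultimately show ?thesis
    using \<open>zorder g Q = 3\<close> lat_cong_eq gQ QRS_zeros by (auto simp: zeros_def)
qed

end
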